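(* For all $\boldsymbol\xi,\boldsymbol\xi'\in P_{II}$: $\mathcal D_{\boldsymbol\xi\text{-unc}}\cup\mathcal D_{\boldsymbol\xi'\text{-unc}}=\mathcal D_{(\boldsymbol\xi\cup\boldsymbol\xi')\text{-unc}}$ and $\mathcal D_{\boldsymbol\xi\text{-unc}}\cap\mathcal D_{\boldsymbol\xi'\text{-unc}}=\mathcal D_{(\boldsymbol\xi\cap\boldsymbol\xi')\text{-unc}}$ (here $\boldsymbol\xi\cup\boldsymbol\xi'$ and $\boldsymbol\xi\cap\boldsymbol\xi'$ are the join and meet in $P_{II}$).
   Context: Let $n\ge1$, $L=\{1,\dots,n\}$, and for $i\in L$ let $\mathcal H_i$ be a Hilbert space with $1<\dim\mathcal H_i<\infty$; $\mathcal H_X=\bigotimes_{i\in X}\mathcal H_i$ and $\mathcal D_X$ is the set of density operators on $\mathcal H_X$. $P_I$ is the set of partitions of $L$ ordered by refinement. For $\xi\in P_I$, $\mathcal D_{\xi\text{-unc}}=\{\varrho\in\mathcal D_L:\varrho=\bigotimes_{X\in\xi}\varrho_X,\ \varrho_X\in\mathcal D_X\}$. $P_{II}$ is the set of nonempty down-sets of $(P_I,\preceq)$, ordered by inclusion (a lattice with meet $\cap$ and join $\cup$), and for $\boldsymbol\xi\in P_{II}$, $\mathcal D_{\boldsymbol\xi\text{-unc}}=\bigcup_{\xi\in\boldsymbol\xi}\mathcal D_{\xi\text{-unc}}$. *)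

theory Defs
  imports "HOL-Analysis.Analysis" "HOL-Library.Disjoint_Sets" "HOL-Library.Complex_Order"
begin

text \<open>Concrete model: H_i = C^(d i), with orthonormal basis indexed by {..< d i}.
  The product basis of H_X is indexed by the extensional functions in
  PiE X (\<lambda>i. {..< d i}). An operator on H_X is represented by its matrix
  kernel (f, g) \<mapsto> <e_f, A e_g>, required to vanish outside the basis index set.\<close>

type_synonym opr = "(nat \<Rightarrow> nat) \<Rightarrow> (nat \<Rightarrow> nat) \<Rightarrow> complex"

definition basis_idx :: "(nat \<Rightarrow> nat) \<Rightarrow> nat set \<Rightarrow> (nat \<Rightarrow> nat) set" where
  "basis_idx d X = PiE X (\<lambda>i. {..< d i})"

definition supported_on :: "(nat \<Rightarrow> nat) \<Rightarrow> nat set \<Rightarrow> opr \<Rightarrow> bool" where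
  "supported_on d X A \<longleftrightarrow>
     (\<forall>f g. f \<notin> basis_idx d X \<or> g \<notin> basis_idx d X \<longrightarrow> A f g = 0)"

definition positive_op :: "(nat \<Rightarrow> nat) \<Rightarrow> nat set \<Rightarrow> opr \<Rightarrow> bool" where
  "positive_op d X A \<longleftrightarrow>
     (\<forall>v :: (nat \<Rightarrow> nat) \<Rightarrow> complex.
        0 \<le> (\<Sum>f\<in>basis_idx d X. \<Sum>g\<in>basis_idx d X. cnj (v f) * A f g * v g))"

definition trace_op :: "(nat \<Rightarrow> nat) \<Rightarrow> nat set \<Rightarrow> opr \<Rightarrow> complex" where
  "trace_op d X A = (\<Sum>f\<in>basis_idx d X. A f f)"

definition density_ops :: "(nat \<Rightarrow> nat) \<Rightarrow> nat set \<Rightarrow> opr set" where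
  "density_ops d X = {A. supported_on d X A \<and> positive_op d X A \<and> trace_op d X A = 1}"

definition tensor_op :: "(nat \<Rightarrow> nat) \<Rightarrow> nat set \<Rightarrow> nat set set \<Rightarrow> (nat set \<Rightarrow> opr) \<Rightarrow> opr" where
  "tensor_op d L xi As = (\<lambda>f g.
     if f \<in> basis_idx d L \<and> g \<in> basis_idx d L
     then (\<Prod>X\<in>xi. As X (restrict f X) (restrict g X)) else 0)"

definition Lset :: "nat \<Rightarrow> nat set" where
  "Lset n = {1..n}"

definition P_I :: "nat \<Rightarrow> nat set set set" where
  "P_I n = {xi. partition_on (Lset n) xi}"

definition refines :: "nat set set \<Rightarrow> nat set set \<Rightarrow> bool" where
  "refines xi eta \<longleftrightarrow> (\<forall>X\<in>xi. \<exists>Y\<in>eta. X \<subseteq> Y)"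

definition P_II :: "nat \<Rightarrow> nat set set set set" where
  "P_II n = {Xi. Xi \<subseteq> P_I n \<and> Xi \<noteq> {} \<and>
     (\<forall>xi\<in>Xi. \<forall>eta\<in>P_I n. refines eta xi \<longrightarrow> eta \<in> Xi)}"

definition D_unc :: "nat \<Rightarrow> (nat \<Rightarrow> nat) \<Rightarrow> nat set set \<Rightarrow> opr set" where
  "D_unc n d xi = {rho \<in> density_ops d (Lset n).
     \<exists>As. (\<forall>X\<in>xi. As X \<in> density_ops d X) \<and> rho = tensor_op d (Lset n) xi As}"

definition D_unc2 :: "nat \<Rightarrow> (nat \<Rightarrow> nat) \<Rightarrow> nat set set set \<Rightarrow> opr set" where
  "D_unc2 n d Xi = (\<Union>xi\<in>Xi. D_unc n d xi)"

end

theory Submission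
  imports Defs
begin

text \<open>Fix a basis index f0 with \<rho> f0 f0 \<noteq> 0 and put \<sigma> = \<rho> / \<rho> f0 f0. If \<rho> is a tensor
  product over a partition \<xi>, then \<sigma> f g is the product, over the blocks X of \<xi>, of \<sigma>
  evaluated at f and g reset to f0 outside X. Factorizations over \<xi> and \<xi>' combine into one
  over the common refinement \<xi> \<sqinter> \<xi>' of all nonempty X \<inter> Y, because empty intersections
  contribute \<sigma> f0 f0 = 1. Conversely, a density operator that factorizes over a partition is
  the tensor product of its normalized slices through f0, which are density operators again.
  As \<xi> \<sqinter> \<xi>' refines both \<xi> and \<xi>', it lies in both down-sets; the statement about
  joins is immediate.\<close>

lemma partition_on_block_eq:
  assumes "partition_on L P" "X \<in> P" "Y \<in> P" "x \<in> X" "x \<in> Y"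
  shows "X = Y"
  using assms unfolding partition_on_def disjoint_def disjnt_def by blast

lemma partition_on_block_subset: "partition_on L P \<Longrightarrow> X \<in> P \<Longrightarrow> X \<subseteq> L"
  using partition_onD1 by blast

lemma partition_on_the_block:
  assumes "partition_on L P" "X \<in> P" "i \<in> X"
  shows "(THE X. X \<in> P \<and> i \<in> X) = X"
proof (rule the_equality)
  fix Y assume "Y \<in> P \<and> i \<in> Y"
  then show "Y = X" using assms partition_on_block_eq[of L P Y X i] by blast
qed (use assms in blast)

lemma finite_basis_idx: "finite X \<Longrightarrow> finite (basis_idx d X)"
  unfolding basis_idx_def by (intro finite_PiE) auto

lemma restrict_in_basis_idx: "f \<in> basis_idx d L \<Longrightarrow> Z \<subseteq> L \<Longrightarrow> restrict f Z \<in> basis_idx d Z"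
  by (auto simp: basis_idx_def)

lemma override_on_in_basis_idx:
  "f0 \<in> basis_idx d L \<Longrightarrow> f \<in> basis_idx d L \<Longrightarrow> override_on f0 f Z \<in> basis_idx d L"
  by (auto simp: basis_idx_def override_on_def PiE_def extensional_def Pi_def)

lemma override_on_block_in_basis_idx:
  "f0 \<in> basis_idx d L \<Longrightarrow> u \<in> basis_idx d Z \<Longrightarrow> Z \<subseteq> L \<Longrightarrow> override_on f0 u Z \<in> basis_idx d L"
  by (auto simp: basis_idx_def override_on_def PiE_def extensional_def Pi_def)

lemma restrict_override_on_block: "u \<in> basis_idx d Z \<Longrightarrow> restrict (override_on f0 u Z) Z = u"
  by (auto simp: basis_idx_def override_on_def PiE_def extensional_def restrict_def)

lemma override_on_restrict: "override_on f0 (restrict f Z) Z = override_on f0 f Z"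
  by (auto simp: override_on_def)

lemma override_on_override_on: "override_on f0 (override_on f0 f X) Y = override_on f0 f (X \<inter> Y)"
  by (auto simp: override_on_def)

lemma restrict_override_on_partition:
  assumes "partition_on L P" "X \<in> P" "Y \<in> P"
  shows "restrict (override_on f0 f X) Y = (if Y = X then restrict f Y else restrict f0 Y)"
  using partition_on_block_eq[OF assms] by (auto simp: override_on_def restrict_def fun_eq_iff)

lemma bij_betw_restrict_blocks:
  assumes P: "partition_on L P"
  shows "bij_betw (\<lambda>f. \<lambda>X\<in>P. restrict f X) (PiE L S) (PiE P (\<lambda>X. PiE X S))"
proof -
  define block where "block i = (THE X. X \<in> P \<and> i \<in> X)" for i
  have block: "block i = X" if "X \<in> P" "i \<in> X" for i X
    unfolding block_def using partition_on_the_block[OF P that] .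
  have block_in: "block i \<in> P \<and> i \<in> block i" if i: "i \<in> L" for i
  proof -
    obtain X where "X \<in> P" "i \<in> X"
      using i partition_onD1[OF P] by blast
    then show ?thesis using block by simp
  qed
  note sub = partition_on_block_subset[OF P]
  define glue where "glue G = (\<lambda>i\<in>L. G (block i) i)" for G :: "'a set \<Rightarrow> 'a \<Rightarrow> 'b"
  show ?thesis
  proof (rule bij_betw_byWitness[where f' = glue])
    show "\<forall>f\<in>PiE L S. glue (\<lambda>X\<in>P. restrict f X) = f"
    proof (intro ballI ext)
      fix f i assume f: "f \<in> PiE L S"
      show "glue (\<lambda>X\<in>P. restrict f X) i = f i"
        using block_in[of i] f by (cases "i \<in> L") (auto simp: glue_def)
    qed
    show "\<forall>G\<in>PiE P (\<lambda>X. PiE X S). (\<lambda>X\<in>P. restrict (glue G) X) = G"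
    proof (intro ballI ext)
      fix G X i assume G: "G \<in> PiE P (\<lambda>X. PiE X S)"
      show "(\<lambda>X\<in>P. restrict (glue G) X) X i = G X i"
      proof (cases "X \<in> P")
        case True
        then have "G X \<in> PiE X S" using G by blast
        then show ?thesis
          using True block[OF True] sub[OF True] by (cases "i \<in> X") (auto simp: glue_def)
      next
        case False
        then show ?thesis using G by auto
      qed
    qed
    show "(\<lambda>f. \<lambda>X\<in>P. restrict f X) ` PiE L S \<subseteq> PiE P (\<lambda>X. PiE X S)"
    proof (rule image_subsetI)
      fix f assume f: "f \<in> PiE L S"
      have "restrict f X \<in> PiE X S" if "X \<in> P" for X
        using sub[OF that] PiE_mem[OF f] by (simp add: restrict_PiE_iff subset_iff)
      then show "(\<lambda>X\<in>P. restrict f X) \<in> PiE P (\<lambda>X. PiE X S)"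
        by (simp add: restrict_PiE_iff)
    qed
    show "glue ` PiE P (\<lambda>X. PiE X S) \<subseteq> PiE L S"
    proof (rule image_subsetI, rule PiE_I)
      fix G i assume G: "G \<in> PiE P (\<lambda>X. PiE X S)" and i: "i \<in> L"
      then have "G (block i) \<in> PiE (block i) S"
        using block_in by blast
      then show "glue G i \<in> S i"
        using block_in[OF i] i PiE_mem[of "G (block i)" "block i" S i] by (simp add: glue_def)
    qed (simp add: glue_def)
  qed
qed

lemma sum_PiE_prod_blocks:
  fixes F :: "'a set \<Rightarrow> ('a \<Rightarrow> 'b) \<Rightarrow> 'c::comm_semiring_1"
  assumes P: "partition_on L P" and "finite L" and "\<And>i. i \<in> L \<Longrightarrow> finite (S i)"
  shows "(\<Sum>f\<in>PiE L S. \<Prod>X\<in>P. F X (restrict f X)) = (\<Prod>X\<in>P. \<Sum>u\<in>PiE X S. F X u)"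
proof -
  note sub = partition_on_block_subset[OF P]
  have "(\<Prod>X\<in>P. \<Sum>u\<in>PiE X S. F X u) = (\<Sum>G\<in>PiE P (\<lambda>X. PiE X S). \<Prod>X\<in>P. F X (G X))"
    using assms sub finite_subset by (intro prod_sum_PiE finite_PiE finite_elements) blast+
  also have "\<dots> = (\<Sum>f\<in>PiE L S. \<Prod>X\<in>P. F X ((\<lambda>X\<in>P. restrict f X) X))"
    by (rule sum.reindex_bij_betw[OF bij_betw_restrict_blocks[OF P], symmetric])
  also have "\<dots> = (\<Sum>f\<in>PiE L S. \<Prod>X\<in>P. F X (restrict f X))"
    by (rule sum.cong[OF refl], rule prod.cong[OF refl]) simp
  finally show ?thesis ..
qed

definition factorizes_at :: "(nat \<Rightarrow> nat) \<Rightarrow> nat set \<Rightarrow> (nat \<Rightarrow> nat) \<Rightarrow> nat set set \<Rightarrow> opr \<Rightarrow> bool" where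
  "factorizes_at d L f0 P \<sigma> \<longleftrightarrow>
     (\<forall>f\<in>basis_idx d L. \<forall>g\<in>basis_idx d L.
        \<sigma> f g = (\<Prod>X\<in>P. \<sigma> (override_on f0 f X) (override_on f0 g X)))"

lemma tensor_op_factorizes_at:
  assumes P: "partition_on L P" "finite P" and f0: "f0 \<in> basis_idx d L"
    and c: "tensor_op d L P As f0 f0 \<noteq> 0"
  shows "factorizes_at d L f0 P (\<lambda>f g. tensor_op d L P As f g / tensor_op d L P As f0 f0)"
  unfolding factorizes_at_def
proof (intro ballI)
  fix f g assume f: "f \<in> basis_idx d L" and g: "g \<in> basis_idx d L"
  define a where "a X = As X (restrict f0 X) (restrict f0 X)" for X
  define \<alpha> where "\<alpha> X = As X (restrict f X) (restrict g X)" for X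
  have c_eq: "tensor_op d L P As f0 f0 = (\<Prod>X\<in>P. a X)"
    using f0 by (simp add: tensor_op_def a_def)
  have a0: "a X \<noteq> 0" if "X \<in> P" for X
    using c c_eq that P(2) by auto
  have block: "tensor_op d L P As (override_on f0 f X) (override_on f0 g X)
      = \<alpha> X / a X * tensor_op d L P As f0 f0" if X: "X \<in> P" for X
  proof -
    have "tensor_op d L P As (override_on f0 f X) (override_on f0 g X)
        = (\<Prod>Y\<in>P. As Y (restrict (override_on f0 f X) Y) (restrict (override_on f0 g X) Y))"
      using f g f0 by (simp add: tensor_op_def override_on_in_basis_idx)
    also have "\<dots> = (\<Prod>Y\<in>P. (if Y = X then \<alpha> Y / a Y else 1) * a Y)"
    proof (rule prod.cong[OF refl])
      fix Y assume Y: "Y \<in> P"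
      show "As Y (restrict (override_on f0 f X) Y) (restrict (override_on f0 g X) Y)
          = (if Y = X then \<alpha> Y / a Y else 1) * a Y"
        using a0[OF Y] restrict_override_on_partition[OF P(1) X Y, of f0]
        by (cases "Y = X") (simp_all add: \<alpha>_def a_def)
    qed
    also have "\<dots> = \<alpha> X / a X * tensor_op d L P As f0 f0"
      using P(2) X by (simp add: prod.distrib c_eq prod.delta)
    finally show ?thesis .
  qed
  have "tensor_op d L P As f g / tensor_op d L P As f0 f0 = (\<Prod>X\<in>P. \<alpha> X / a X)"
    using f g f0 by (simp add: tensor_op_def prod_dividef \<alpha>_def a_def)
  also have "\<dots> = (\<Prod>X\<in>P. tensor_op d L P As (override_on f0 f X) (override_on f0 g X)
                     / tensor_op d L P As f0 f0)"
    using block c by (intro prod.cong) auto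
  finally show "tensor_op d L P As f g / tensor_op d L P As f0 f0 = \<dots>" .
qed

definition partition_meet :: "'a set set \<Rightarrow> 'a set set \<Rightarrow> 'a set set" where
  "partition_meet P Q = {X \<inter> Y | X Y. X \<in> P \<and> Y \<in> Q \<and> X \<inter> Y \<noteq> {}}"

lemma partition_on_partition_meet:
  assumes P: "partition_on L P" and Q: "partition_on L Q"
  shows "partition_on L (partition_meet P Q)"
proof (rule partition_onI)
  have "i \<in> \<Union>(partition_meet P Q)" if "i \<in> L" for i
  proof -
    obtain X Y where "X \<in> P" "Y \<in> Q" "i \<in> X" "i \<in> Y"
      using \<open>i \<in> L\<close> partition_onD1[OF P] partition_onD1[OF Q] by blast
    then show ?thesis unfolding partition_meet_def by blast
  qed
  moreover have "\<Union>(partition_meet P Q) \<subseteq> L"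
    using partition_onD1[OF P] by (auto simp: partition_meet_def)
  ultimately show "\<Union>(partition_meet P Q) = L" by blast
  show "disjnt Z Z'" if Z_in: "Z \<in> partition_meet P Q" and Z'_in: "Z' \<in> partition_meet P Q"
    and "Z \<noteq> Z'" for Z Z'
  proof -
    obtain X Y X' Y' where Z: "Z = X \<inter> Y" "X \<in> P" "Y \<in> Q" and Z': "Z' = X' \<inter> Y'" "X' \<in> P" "Y' \<in> Q"
      using Z_in Z'_in unfolding partition_meet_def by blast
    have "X = X' \<and> Y = Y'" if "i \<in> Z" "i \<in> Z'" for i
      using that Z Z' partition_on_block_eq[OF P, of X X' i] partition_on_block_eq[OF Q, of Y Y' i] by blast
    then show ?thesis
      using \<open>Z \<noteq> Z'\<close> Z Z' unfolding disjnt_def by blast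
  qed
qed (auto simp: partition_meet_def)

lemma bij_betw_Int_partition_meet:
  assumes P: "partition_on L P" and Q: "partition_on L Q"
  shows "bij_betw (\<lambda>p. fst p \<inter> snd p) {p \<in> P \<times> Q. fst p \<inter> snd p \<noteq> {}} (partition_meet P Q)"
proof -
  define N where "N = {p \<in> P \<times> Q. fst p \<inter> snd p \<noteq> {}}"
  have "inj_on (\<lambda>p. fst p \<inter> snd p) N"
  proof (rule inj_onI)
    fix p q assume p: "p \<in> N" and q: "q \<in> N" and eq: "fst p \<inter> snd p = fst q \<inter> snd q"
    then obtain i where i: "i \<in> fst p" "i \<in> snd p" "i \<in> fst q" "i \<in> snd q"
      unfolding N_def by blast
    have "fst p = fst q"
      using partition_on_block_eq[OF P _ _ i(1,3)] p q unfolding N_def by auto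
    moreover have "snd p = snd q"
      using partition_on_block_eq[OF Q _ _ i(2,4)] p q unfolding N_def by auto
    ultimately show "p = q" by (simp add: prod_eq_iff)
  qed
  moreover have "(\<lambda>p. fst p \<inter> snd p) ` N = partition_meet P Q"
  proof (intro equalityI subsetI)
    fix Z assume "Z \<in> (\<lambda>p. fst p \<inter> snd p) ` N"
    then obtain p where p: "p \<in> N" and Z: "Z = fst p \<inter> snd p"
      by blast
    show "Z \<in> partition_meet P Q"
      using p unfolding N_def partition_meet_def Z
      by (intro CollectI exI[of _ "fst p"] exI[of _ "snd p"]) auto
  next
    fix Z assume "Z \<in> partition_meet P Q"
    then obtain X Y where "Z = X \<inter> Y" "X \<in> P" "Y \<in> Q" "X \<inter> Y \<noteq> {}"
      unfolding partition_meet_def by blast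
    then show "Z \<in> (\<lambda>p. fst p \<inter> snd p) ` N"
      unfolding N_def by (intro image_eqI[of _ _ "(X, Y)"]) auto
  qed
  ultimately show ?thesis
    unfolding N_def bij_betw_def by blast
qed

lemma prod_partition_meet:
  fixes h :: "'a set \<Rightarrow> 'b::comm_monoid_mult"
  assumes P: "partition_on L P" "finite P" and Q: "partition_on L Q" "finite Q"
    and "h {} = 1"
  shows "(\<Prod>X\<in>P. \<Prod>Y\<in>Q. h (X \<inter> Y)) = (\<Prod>Z\<in>partition_meet P Q. h Z)"
proof -
  define N where "N = {p \<in> P \<times> Q. fst p \<inter> snd p \<noteq> {}}"
  have "(\<Prod>Z\<in>partition_meet P Q. h Z) = (\<Prod>p\<in>N. h (fst p \<inter> snd p))"
    unfolding N_def by (rule prod.reindex_bij_betw[OF bij_betw_Int_partition_meet[OF P(1) Q(1)], symmetric])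
  also have "\<dots> = (\<Prod>p\<in>P \<times> Q. h (fst p \<inter> snd p))"
    using P Q assms(5) by (intro prod.mono_neutral_left) (auto simp: N_def)
  also have "\<dots> = (\<Prod>X\<in>P. \<Prod>Y\<in>Q. h (X \<inter> Y))"
    by (simp add: prod.cartesian_product case_prod_beta)
  finally show ?thesis ..
qed

lemma factorizes_at_partition_meet:
  assumes P: "partition_on L P" "finite P" and Q: "partition_on L Q" "finite Q"
    and f0: "f0 \<in> basis_idx d L" and "\<sigma> f0 f0 = 1"
    and "factorizes_at d L f0 P \<sigma>" and "factorizes_at d L f0 Q \<sigma>"
  shows "factorizes_at d L f0 (partition_meet P Q) \<sigma>"
  unfolding factorizes_at_def
proof (intro ballI)
  fix f g assume f: "f \<in> basis_idx d L" and g: "g \<in> basis_idx d L"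
  have "\<sigma> f g = (\<Prod>X\<in>P. \<sigma> (override_on f0 f X) (override_on f0 g X))"
    using assms(7) f g by (simp add: factorizes_at_def)
  also have "\<dots> = (\<Prod>X\<in>P. \<Prod>Y\<in>Q. \<sigma> (override_on f0 f (X \<inter> Y)) (override_on f0 g (X \<inter> Y)))"
  proof (rule prod.cong[OF refl])
    fix X
    have "override_on f0 f X \<in> basis_idx d L" "override_on f0 g X \<in> basis_idx d L"
      using f g f0 by (simp_all add: override_on_in_basis_idx)
    then show "\<sigma> (override_on f0 f X) (override_on f0 g X)
        = (\<Prod>Y\<in>Q. \<sigma> (override_on f0 f (X \<inter> Y)) (override_on f0 g (X \<inter> Y)))"
      using assms(8) unfolding factorizes_at_def override_on_override_on[symmetric] by blast
  qed
  also have "\<dots> = (\<Prod>Z\<in>partition_meet P Q. \<sigma> (override_on f0 f Z) (override_on f0 g Z))"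
    using P Q assms(6) by (intro prod_partition_meet) simp_all
  finally show "\<sigma> f g = \<dots>" .
qed

lemma complex_divide_nonneg: "0 \<le> (a::complex) \<Longrightarrow> 0 < t \<Longrightarrow> 0 \<le> a / t"
  by (auto simp: less_eq_complex_def less_complex_def Re_divide Im_divide)

lemma positive_op_diag_nonneg:
  assumes "positive_op d L A" "f \<in> basis_idx d L" "finite L"
  shows "0 \<le> A f f"
proof -
  let ?e = "\<lambda>h. if h = f then 1 else 0 :: complex"
  have "cnj (?e h) * A h g * ?e g = (if g = f then (if h = f then A h g else 0) else 0)" for h g
    by simp
  then have "(\<Sum>h\<in>basis_idx d L. \<Sum>g\<in>basis_idx d L. cnj (?e h) * A h g * ?e g) = A f f"
    using assms(2,3) finite_basis_idx by simp
  then show ?thesis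
    using spec[OF assms(1)[unfolded positive_op_def], of ?e] by simp
qed

text \<open>The compression of \<rho> to the copy of H_Z spanned by the basis vectors that agree with f0
  outside Z.\<close>

definition slice_op :: "(nat \<Rightarrow> nat) \<Rightarrow> (nat \<Rightarrow> nat) \<Rightarrow> nat set \<Rightarrow> opr \<Rightarrow> opr" where
  "slice_op d f0 Z \<rho> = (\<lambda>u v.
     if u \<in> basis_idx d Z \<and> v \<in> basis_idx d Z
     then \<rho> (override_on f0 u Z) (override_on f0 v Z) else 0)"

lemma supported_on_slice_op: "supported_on d Z (slice_op d f0 Z \<rho>)"
  by (auto simp: supported_on_def slice_op_def)

lemma positive_op_slice_op:
  assumes pos: "positive_op d L \<rho>" and Z: "Z \<subseteq> L" and f0: "f0 \<in> basis_idx d L" and "finite L"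
  shows "positive_op d Z (slice_op d f0 Z \<rho>)"
  unfolding positive_op_def
proof
  fix w :: "(nat \<Rightarrow> nat) \<Rightarrow> complex"
  define S where "S = (\<lambda>u. override_on f0 u Z) ` basis_idx d Z"
  define V where "V f = (if f \<in> S then w (restrict f Z) else 0)" for f
  have SL: "S \<subseteq> basis_idx d L"
    using override_on_block_in_basis_idx[OF f0 _ Z] by (auto simp: S_def)
  have fin: "finite (basis_idx d L)"
    using \<open>finite L\<close> by (rule finite_basis_idx)
  have inj: "inj_on (\<lambda>u. override_on f0 u Z) (basis_idx d Z)"
    by (rule inj_on_inverseI[where g = "\<lambda>f. restrict f Z"]) (rule restrict_override_on_block)
  have V: "V (override_on f0 u Z) = w u" if "u \<in> basis_idx d Z" for u
    using that by (auto simp: V_def S_def restrict_override_on_block)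
  have "0 \<le> (\<Sum>f\<in>basis_idx d L. \<Sum>g\<in>basis_idx d L. cnj (V f) * \<rho> f g * V g)"
    using spec[OF pos[unfolded positive_op_def], of V] .
  also have "\<dots> = (\<Sum>f\<in>S. \<Sum>g\<in>basis_idx d L. cnj (V f) * \<rho> f g * V g)"
    using SL fin by (intro sum.mono_neutral_right) (auto simp: V_def)
  also have "\<dots> = (\<Sum>f\<in>S. \<Sum>g\<in>S. cnj (V f) * \<rho> f g * V g)"
    using SL fin by (intro sum.cong refl sum.mono_neutral_right) (auto simp: V_def)
  also have "\<dots> = (\<Sum>u\<in>basis_idx d Z. \<Sum>v\<in>basis_idx d Z. cnj (w u) * slice_op d f0 Z \<rho> u v * w v)"
    unfolding S_def using inj by (simp add: sum.reindex V slice_op_def)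
  finally show "0 \<le> \<dots>" .
qed

lemma trace_slice_op_pos:
  assumes pos: "positive_op d L \<rho>" and Z: "Z \<subseteq> L" and f0: "f0 \<in> basis_idx d L" and "finite L"
    and "\<rho> f0 f0 \<noteq> 0"
  shows "0 < trace_op d Z (slice_op d f0 Z \<rho>)"
proof -
  have "finite Z"
    using Z \<open>finite L\<close> finite_subset by blast
  have f0_Z: "override_on f0 (restrict f0 Z) Z = f0"
    by (auto simp: override_on_def fun_eq_iff)
  have "0 < \<rho> f0 f0"
    using positive_op_diag_nonneg[OF pos f0 \<open>finite L\<close>] \<open>\<rho> f0 f0 \<noteq> 0\<close> by (simp add: order_less_le)
  also have "\<rho> f0 f0 = slice_op d f0 Z \<rho> (restrict f0 Z) (restrict f0 Z)"
    using f0_Z restrict_in_basis_idx[OF f0 Z] by (simp add: slice_op_def)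
  also have "\<dots> \<le> trace_op d Z (slice_op d f0 Z \<rho>)"
    unfolding trace_op_def
    using finite_basis_idx[OF \<open>finite Z\<close>]
      positive_op_diag_nonneg[OF pos override_on_block_in_basis_idx[OF f0 _ Z] \<open>finite L\<close>]
    by (intro member_le_sum[OF restrict_in_basis_idx[OF f0 Z]]) (auto simp: slice_op_def)
  finally show ?thesis .
qed

lemma normalized_in_density_ops:
  assumes "supported_on d X A" "positive_op d X A" "0 < trace_op d X A"
  shows "(\<lambda>u v. A u v / trace_op d X A) \<in> density_ops d X"
proof -
  have "positive_op d X (\<lambda>u v. A u v / trace_op d X A)"
    unfolding positive_op_def
  proof
    fix w :: "(nat \<Rightarrow> nat) \<Rightarrow> complex"
    have "0 \<le> (\<Sum>u\<in>basis_idx d X. \<Sum>v\<in>basis_idx d X. cnj (w u) * A u v * w v)"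
      using spec[OF assms(2)[unfolded positive_op_def], of w] .
    then have "0 \<le> (\<Sum>u\<in>basis_idx d X. \<Sum>v\<in>basis_idx d X. cnj (w u) * A u v * w v) / trace_op d X A"
      using assms(3) by (rule complex_divide_nonneg)
    then show "0 \<le> (\<Sum>u\<in>basis_idx d X. \<Sum>v\<in>basis_idx d X. cnj (w u) * (A u v / trace_op d X A) * w v)"
      by (simp only: times_divide_eq_right times_divide_eq_left sum_divide_distrib)
  qed
  moreover have "trace_op d X (\<lambda>u v. A u v / trace_op d X A) = 1"
    using assms(3) by (simp add: trace_op_def sum_divide_distrib[symmetric])
  ultimately show ?thesis
    using assms(1) by (simp add: density_ops_def supported_on_def)
qed

lemma trace_tensor_op:
  assumes "partition_on L P" "finite L"
  shows "trace_op d L (tensor_op d L P As) = (\<Prod>X\<in>P. trace_op d X (As X))"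
proof -
  have "trace_op d L (tensor_op d L P As) = (\<Sum>f\<in>basis_idx d L. \<Prod>X\<in>P. As X (restrict f X) (restrict f X))"
    by (simp add: trace_op_def tensor_op_def)
  also have "\<dots> = (\<Prod>X\<in>P. \<Sum>u\<in>basis_idx d X. As X u u)"
    unfolding basis_idx_def by (rule sum_PiE_prod_blocks[OF assms]) simp
  finally show ?thesis
    by (simp add: trace_op_def)
qed

lemma eq_if_proportional_trace_eq:
  assumes "\<And>f g. A f g = K * B f g" and "trace_op d L A = trace_op d L B" "trace_op d L B \<noteq> 0"
  shows "A = B"
proof -
  have "trace_op d L A = K * trace_op d L B"
    using assms(1) by (simp add: trace_op_def sum_distrib_left)
  then have "K = 1"
    using assms(2,3) by simp
  then show ?thesis
    using assms(1) by (simp add: fun_eq_iff)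
qed

lemma tensor_op_of_factorizes_at:
  assumes \<rho>: "\<rho> \<in> density_ops d L" and "finite L" and P: "partition_on L P"
    and f0: "f0 \<in> basis_idx d L" and c: "\<rho> f0 f0 \<noteq> 0"
    and fact: "factorizes_at d L f0 P (\<lambda>f g. \<rho> f g / \<rho> f0 f0)"
  shows "\<exists>As. (\<forall>X\<in>P. As X \<in> density_ops d X) \<and> \<rho> = tensor_op d L P As"
proof -
  have sup: "supported_on d L \<rho>" and pos: "positive_op d L \<rho>" and tr: "trace_op d L \<rho> = 1"
    using \<rho> by (simp_all add: density_ops_def)
  note sub = partition_on_block_subset[OF P]
  define t where "t X = trace_op d X (slice_op d f0 X \<rho>)" for X
  have t_pos: "0 < t X" if "X \<in> P" for X
    unfolding t_def using c by (rule trace_slice_op_pos[OF pos sub[OF that] f0 \<open>finite L\<close>])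
  define As where "As X = (\<lambda>u v. slice_op d f0 X \<rho> u v / t X)" for X
  have As: "As X \<in> density_ops d X" if "X \<in> P" for X
    unfolding As_def t_def
    using supported_on_slice_op positive_op_slice_op[OF pos sub[OF that] f0 \<open>finite L\<close>] t_pos[OF that]
    by (intro normalized_in_density_ops) (simp_all add: t_def)
  define K where "K = \<rho> f0 f0 * (\<Prod>X\<in>P. t X / \<rho> f0 f0)"
  have \<rho>_eq: "\<rho> f g = K * tensor_op d L P As f g" for f g
  proof (cases "f \<in> basis_idx d L \<and> g \<in> basis_idx d L")
    case True
    then have "\<rho> f g / \<rho> f0 f0 = (\<Prod>X\<in>P. \<rho> (override_on f0 f X) (override_on f0 g X) / \<rho> f0 f0)"
      using fact unfolding factorizes_at_def by blast
    then have "\<rho> f g = \<rho> f0 f0 * (\<Prod>X\<in>P. \<rho> (override_on f0 f X) (override_on f0 g X) / \<rho> f0 f0)"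
      using c by (simp add: divide_eq_eq mult.commute)
    also have "\<dots> = \<rho> f0 f0 * (\<Prod>X\<in>P. t X / \<rho> f0 f0 * As X (restrict f X) (restrict g X))"
    proof (intro arg_cong[where f = "(*) _"] prod.cong refl)
      fix X assume X: "X \<in> P"
      have "As X (restrict f X) (restrict g X) = \<rho> (override_on f0 f X) (override_on f0 g X) / t X"
        using True restrict_in_basis_idx[OF _ sub[OF X], of _ d]
        by (simp add: As_def slice_op_def override_on_restrict)
      then show "\<rho> (override_on f0 f X) (override_on f0 g X) / \<rho> f0 f0
          = t X / \<rho> f0 f0 * As X (restrict f X) (restrict g X)"
        using t_pos[OF X] by simp
    qed
    also have "\<dots> = K * (\<Prod>X\<in>P. As X (restrict f X) (restrict g X))"
      by (simp only: prod.distrib K_def mult.assoc)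
    also have "\<dots> = K * tensor_op d L P As f g"
      using True by (simp add: tensor_op_def)
    finally show ?thesis .
  next
    case False
    then show ?thesis
      using sup by (auto simp: supported_on_def tensor_op_def)
  qed
  have "trace_op d L (tensor_op d L P As) = 1"
    using As by (simp add: trace_tensor_op[OF P \<open>finite L\<close>] density_ops_def)
  then have "\<rho> = tensor_op d L P As"
    using \<rho>_eq tr by (intro eq_if_proportional_trace_eq[where K = K and d = d and L = L]) simp_all
  then show ?thesis
    using As by blast
qed

lemma D_unc_Int_subset_partition_meet:
  assumes P: "partition_on (Lset n) P" and Q: "partition_on (Lset n) Q"
  shows "D_unc n d P \<inter> D_unc n d Q \<subseteq> D_unc n d (partition_meet P Q)"
proof
  fix \<rho> assume "\<rho> \<in> D_unc n d P \<inter> D_unc n d Q"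
  then obtain As Bs where \<rho>: "\<rho> \<in> density_ops d (Lset n)"
    and As: "\<rho> = tensor_op d (Lset n) P As" and Bs: "\<rho> = tensor_op d (Lset n) Q Bs"
    unfolding D_unc_def by blast
  have fin: "finite (Lset n)"
    by (simp add: Lset_def)
  have fin_PQ: "finite P" "finite Q"
    using finite_elements[OF fin] P Q by blast+
  have "trace_op d (Lset n) \<rho> = 1"
    using \<rho> by (simp add: density_ops_def)
  then obtain f0 where f0: "f0 \<in> basis_idx d (Lset n)" and c: "\<rho> f0 f0 \<noteq> 0"
    unfolding trace_op_def by (metis (no_types, lifting) sum.neutral zero_neq_one)
  let ?\<sigma> = "\<lambda>f g. \<rho> f g / \<rho> f0 f0"
  have "factorizes_at d (Lset n) f0 P ?\<sigma>"
    using tensor_op_factorizes_at[OF P fin_PQ(1) f0, of As] As c by simp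
  moreover have "factorizes_at d (Lset n) f0 Q ?\<sigma>"
    using tensor_op_factorizes_at[OF Q fin_PQ(2) f0, of Bs] Bs c by simp
  ultimately have "factorizes_at d (Lset n) f0 (partition_meet P Q) ?\<sigma>"
    using factorizes_at_partition_meet[OF P fin_PQ(1) Q fin_PQ(2) f0] c by simp
  then obtain Cs where "\<forall>Z\<in>partition_meet P Q. Cs Z \<in> density_ops d Z"
    and "\<rho> = tensor_op d (Lset n) (partition_meet P Q) Cs"
    using tensor_op_of_factorizes_at[OF \<rho> fin partition_on_partition_meet[OF P Q] f0] c by blast
  then show "\<rho> \<in> D_unc n d (partition_meet P Q)"
    using \<rho> unfolding D_unc_def by blast
qed

theorem mainTheorem19:
  fixes n :: nat and d :: "nat \<Rightarrow> nat" and Xi Xi' :: "nat set set set"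
  assumes "n \<ge> 1"
    and "\<forall>i\<in>Lset n. 1 < d i"
    and "Xi \<in> P_II n" and "Xi' \<in> P_II n"
  shows "D_unc2 n d Xi \<union> D_unc2 n d Xi' = D_unc2 n d (Xi \<union> Xi')
     \<and> D_unc2 n d Xi \<inter> D_unc2 n d Xi' = D_unc2 n d (Xi \<inter> Xi')"
proof
  show "D_unc2 n d Xi \<union> D_unc2 n d Xi' = D_unc2 n d (Xi \<union> Xi')"
    by (simp add: D_unc2_def)
  have "\<rho> \<in> D_unc2 n d (Xi \<inter> Xi')" if "\<rho> \<in> D_unc n d P" "P \<in> Xi" "\<rho> \<in> D_unc n d Q" "Q \<in> Xi'" for \<rho> P Q
  proof -
    have P: "partition_on (Lset n) P" and Q: "partition_on (Lset n) Q"
      using that assms(3,4) by (auto simp: P_II_def P_I_def)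
    have "partition_meet P Q \<in> P_I n"
      using partition_on_partition_meet[OF P Q] by (simp add: P_I_def)
    moreover have "refines (partition_meet P Q) P" "refines (partition_meet P Q) Q"
      unfolding refines_def partition_meet_def by blast+
    ultimately have "partition_meet P Q \<in> Xi \<inter> Xi'"
      using that assms(3,4) unfolding P_II_def by blast
    then show ?thesis
      using D_unc_Int_subset_partition_meet[OF P Q] that by (auto simp: D_unc2_def)
  qed
  then show "D_unc2 n d Xi \<inter> D_unc2 n d Xi' = D_unc2 n d (Xi \<inter> Xi')"
    by (auto simp: D_unc2_def)
qed

end
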